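(* Fix integers $k,l\geq 2$, $m\ge 1$, $a\in\mathbb{Z}$, a polynomial $R(x_1,\dots,x_m)\in\mathbb{Z}[x_1,\dots,x_m]$, and integers $0\le s\le r$ with $r\ge1$. Let $P(x)=(x-a)^e\prod_{j=1}^t P_j(x)^{e_j}\in\mathbb{Z}[x]$ with $e\geq1$, $e_j\ge1$, where $P_1,\dots,P_t\in\mathbb{Z}[x]$ are distinct irreducible polynomials. Then the equation $$P(x)=\prod_{i=1}^s n_i!\cdot\prod_{i=s+1}^r n_i!!$$ has only finitely many solutions $(n_1,\dots,n_r,x)$ with $n_1,\dots,n_r$ positive integers and $x\in S_{a,R}$.
   Context: For a positive integer $x=\prod_{i\in I}p_i^{\alpha_i}$, $K(x)=\max_{i\in I}\alpha_i$ (with $K(1)=0$) and $\omega(x)=|I|$. $\mathcal{F}_k=\{x\in\mathbb{N}: K(x)<k\}$, $\mathcal{P}_l=\{x\in\mathbb{N}:\omega(x)<l\}$, and $\mathcal{F}_k\mathcal{P}_l=\{yz: y\in\mathcal{F}_k, z\in\mathcal{P}_l\}$. $S_{a,R}=\{x_1\cdots x_m\cdot R(x_1,\dots,x_m)+a : x_1,\dots,x_m\in\mathcal{F}_k\mathcal{P}_l\}$. $n!!$ is the double factorial. *)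

theory Defs
  imports "HOL-Computational_Algebra.Computational_Algebra"
begin

definition Kexp :: "nat \<Rightarrow> nat" where
  "Kexp x = Max (insert 0 ((\<lambda>p. multiplicity p x) ` prime_factors x))"

definition omega :: "nat \<Rightarrow> nat" where
  "omega x = card (prime_factors x)"

definition Fk :: "nat \<Rightarrow> nat set" where
  "Fk k = {x. x > 0 \<and> Kexp x < k}"

definition Pl :: "nat \<Rightarrow> nat set" where
  "Pl l = {x. x > 0 \<and> omega x < l}"

definition FkPl :: "nat \<Rightarrow> nat \<Rightarrow> nat set" where
  "FkPl k l = {y * z | y z. y \<in> Fk k \<and> z \<in> Pl l}"

(* A polynomial in Z[x_1,...,x_m] is represented as a finite list of monomials
   (c, e), meaning c * x_1^(e 0) * ... * x_m^(e (m-1)). Variables x_{i+1} = xs ! i. *)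
definition mpoly_eval :: "nat \<Rightarrow> (int \<times> (nat \<Rightarrow> nat)) list \<Rightarrow> int list \<Rightarrow> int" where
  "mpoly_eval m R xs = (\<Sum>(c, e) \<leftarrow> R. c * (\<Prod>i<m. (xs ! i) ^ e i))"

definition S_set :: "nat \<Rightarrow> nat \<Rightarrow> nat \<Rightarrow> int \<Rightarrow> (int \<times> (nat \<Rightarrow> nat)) list \<Rightarrow> int set" where
  "S_set k l m a R = {int (prod_list xs) * mpoly_eval m R (map int xs) + a
                       | xs. length xs = m \<and> set xs \<subseteq> FkPl k l}"

fun dfact :: "nat \<Rightarrow> nat" where
  "dfact 0 = 1"
| "dfact (Suc 0) = 1"
| "dfact (Suc (Suc n)) = Suc (Suc n) * dfact n"

end

theory Submission
  imports Defs
begin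

text \<open>
  Let \<open>n\<close> be the largest \<open>n\<^sub>i\<close> and \<open>N\<close> the right-hand side. Then \<open>N\<close> divides \<open>(n!)\<^sup>r\<close>, and
  \<open>n! \<le> N\<^sup>2\<close> because \<open>n! \<le> (n!!)\<^sup>2\<close>. Since \<open>x - a\<close> divides \<open>P(x) = N\<close>, every \<open>x\<^sub>i\<close> divides
  \<open>(n!)\<^sup>r\<close>. An element of \<open>F\<^sub>k\<close> dividing \<open>(n!)\<^sup>r\<close> is at most the \<open>(k-1)\<close>-th power of the product
  of the primes up to \<open>n\<close>, hence at most \<open>4\<^bsup>n(k-1)\<^esup>\<close> by Erdos' bound on the primorial; an element
  of \<open>P\<^sub>l\<close> is a product of fewer than \<open>l\<close> prime powers, each at most the \<open>p\<close>-part of \<open>(n!)\<^sup>r\<close>,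
  which is at most \<open>4\<^bsup>nr\<^esup>\<close> by Legendre's formula. So \<open>|x|\<close>, and with it \<open>N = P(x)\<close>, grows at
  most exponentially in \<open>n\<close>, which contradicts \<open>n! \<le> N\<^sup>2\<close> for large \<open>n\<close>. Hence \<open>n\<close> and then \<open>x\<close>
  are bounded.
\<close>

lemma dfact_pos: "dfact n > 0"
  by (induction n rule: dfact.induct) auto

lemma dfact_Suc_mult_dfact: "dfact (Suc n) * dfact n = fact (Suc n)"
  by (induction n) (simp_all add: algebra_simps)

lemma dfact_le_Suc: "dfact n \<le> dfact (Suc n)"
proof (induction n rule: dfact.induct)
  case (3 n)
  have "Suc (Suc n) * dfact n \<le> Suc (Suc (Suc n)) * dfact (Suc n)"
    using 3 by (intro mult_le_mono) simp_all
  then show ?case by simp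
qed simp_all

lemma fact_le_dfact_square: "fact n \<le> dfact n ^ 2"
proof (cases n)
  case (Suc m)
  have "fact n = dfact n * dfact m"
    using dfact_Suc_mult_dfact[of m] Suc by simp
  also have "\<dots> \<le> dfact n * dfact n"
    using dfact_le_Suc[of m] Suc by simp
  finally show ?thesis by (simp add: power2_eq_square)
qed simp

lemma dfact_dvd_fact: "dfact n dvd fact n"
  by (cases n) (simp, metis dfact_Suc_mult_dfact dvd_triv_left)

lemma multiplicity_fact_div:
  fixes p :: nat
  assumes p: "prime p"
  shows "multiplicity p (fact n :: nat) = n div p + multiplicity p (fact (n div p) :: nat)"
proof (induction n)
  case (Suc n)
  have fact_Suc_split:
    "multiplicity p (fact (Suc j) :: nat) = multiplicity p (Suc j) + multiplicity p (fact j :: nat)" for j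
    unfolding fact_Suc of_nat_id using p by (intro prime_elem_multiplicity_mult_distrib) auto
  show ?case
  proof (cases "p dvd Suc n")
    case True
    then obtain q where q: "Suc n = p * q" ..
    have "p > 1" using p prime_gt_1_nat by blast
    then have "q > 0" and div_q: "Suc n div p = q" and "n div p = q - 1"
      using q div_Suc[of n p] by (auto split: if_splits)
    have "multiplicity p (Suc n) = Suc (multiplicity p q)"
      using q \<open>q > 0\<close> \<open>p > 1\<close> by (simp add: multiplicity_times_same)
    then have "multiplicity p (fact (Suc n) :: nat)
        = q + (multiplicity p q + multiplicity p (fact (q - 1) :: nat))"
      using fact_Suc_split[of n] Suc.IH \<open>n div p = q - 1\<close> \<open>q > 0\<close> by simp
    also have "\<dots> = q + multiplicity p (fact q :: nat)"
      using fact_Suc_split[of "q - 1"] \<open>q > 0\<close> by simp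
    finally show ?thesis using div_q by simp
  next
    case False
    then have "multiplicity p (Suc n) = 0" and "Suc n div p = n div p"
      using div_Suc[of n p] by (auto simp: not_dvd_imp_multiplicity_0 dvd_eq_mod_eq_0)
    then show ?thesis using fact_Suc_split[of n] Suc.IH by simp
  qed
qed simp

lemma prime_power_multiplicity_fact_le:
  fixes p :: nat
  assumes p: "prime p"
  shows "p ^ multiplicity p (fact n) \<le> 4 ^ n"
proof (induction n rule: less_induct)
  case (less n)
  define q where "q = n div p"
  have "p > 1" using p prime_gt_1_nat by blast
  have four_p: "4 * j \<le> (4::nat) ^ j" for j
  proof (induction j)
    case (Suc j)
    then show ?case by (cases j) simp_all
  qed simp
  show ?case
  proof (cases "n = 0")
    case False
    then have "q < n" using \<open>p > 1\<close> unfolding q_def by simp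
    have "p ^ multiplicity p (fact n) = p ^ q * p ^ multiplicity p (fact q)"
      using multiplicity_fact_div[OF p, of n] unfolding q_def by (simp add: power_add)
    also have "\<dots> \<le> p ^ q * 4 ^ q" using less[OF \<open>q < n\<close>] by simp
    also have "\<dots> = (4 * p) ^ q" by (simp add: power_mult_distrib)
    also have "\<dots> \<le> (4 ^ p) ^ q" using four_p[of p] by (intro power_mono) auto
    also have "\<dots> = 4 ^ (p * q)" by (simp add: power_mult)
    also have "\<dots> \<le> 4 ^ n" unfolding q_def by (intro power_increasing) auto
    finally show ?thesis .
  qed simp
qed

definition primorial :: "nat \<Rightarrow> nat" where
  "primorial n = \<Prod>{p. prime p \<and> p \<le> n}"

lemma prod_primes_dvd:
  fixes A :: "nat set"
  assumes "finite A" and "\<And>p. p \<in> A \<Longrightarrow> prime p" and "\<And>p. p \<in> A \<Longrightarrow> p dvd x"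
  shows "\<Prod>A dvd x"
  using assms
proof (induction A rule: finite_induct)
  case (insert p A)
  have "coprime p (\<Prod>A)"
    using insert by (intro prod_coprime_right) (metis insert_iff primes_coprime)
  then show ?case using insert by (simp add: divides_mult)
qed simp

lemma primorial_dvd_fact: "primorial n dvd fact n"
  unfolding primorial_def by (intro prod_primes_dvd) (auto simp: prime_dvd_fact_iff)

lemma binomial_odd_middle_le: "(2 * m + 1) choose m \<le> 4 ^ m"
proof -
  have "2 * ((2 * m + 1) choose m) = (\<Sum>j\<in>{m, m + 1}. (2 * m + 1) choose j)"
    using binomial_symmetric[of m "2 * m + 1"] by simp
  also have "\<dots> \<le> (\<Sum>j\<le>2 * m + 1. (2 * m + 1) choose j)" by (intro sum_mono2) auto
  also have "\<dots> = 2 ^ (2 * m + 1)" by (rule choose_row_sum)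
  also have "\<dots> = 2 * 4 ^ m" by (simp add: power_mult)
  finally show ?thesis by simp
qed

lemma prod_primes_between_dvd_binomial:
  "\<Prod>{p. prime p \<and> m + 1 < p \<and> p \<le> 2 * m + 1} dvd (2 * m + 1) choose m"
proof (intro prod_primes_dvd)
  fix p assume p: "p \<in> {p. prime p \<and> m + 1 < p \<and> p \<le> 2 * m + 1}"
  then have "prime p" by simp
  have "fact (2 * m + 1) = fact m * fact (m + 1) * ((2 * m + 1) choose m)"
    using binomial_fact_lemma[of m "2 * m + 1"] by (simp add: Suc_diff_le del: fact_Suc)
  moreover have "p dvd fact (2 * m + 1)" and "\<not> p dvd fact m" and "\<not> p dvd fact (m + 1)"
    using p by (auto simp: prime_dvd_fact_iff simp del: fact_Suc)
  ultimately show "p dvd (2 * m + 1) choose m"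
    using \<open>prime p\<close> by (metis prime_dvd_mult_iff)
qed auto

lemma primorial_le_four_power: "primorial n \<le> 4 ^ n"
proof (induction n rule: less_induct)
  case (less n)
  consider "n \<le> 2" | "n > 2" "even n" | m where "n = 2 * m + 1" "m \<ge> 1"
  proof (cases "even n")
    case True
    then show ?thesis using that(1) that(2)[OF _ True] by force
  next
    case False
    then obtain m where "n = 2 * m + 1" by (rule oddE)
    then show ?thesis using that by (cases "m = 0") auto
  qed
  then show ?case
  proof cases
    case 1
    then have "fact n \<le> (4 :: nat) ^ n" by (auto simp: le_Suc_eq numeral_2_eq_2)
    then show ?thesis using primorial_dvd_fact[of n] dvd_imp_le[of "primorial n" "fact n"] by simp
  next
    case 2
    then have "\<not> prime n" using prime_odd_nat[of n] by auto
    then have "{p. prime p \<and> p \<le> n} = {p. prime p \<and> p \<le> n - 1}"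
      by (auto simp: le_less)
    then have "primorial n = primorial (n - 1)" unfolding primorial_def by simp
    also have "\<dots> \<le> 4 ^ (n - 1)" using less 2 by simp
    also have "\<dots> \<le> 4 ^ n" by (intro power_increasing) auto
    finally show ?thesis .
  next
    case 3
    have "{p. prime p \<and> p \<le> n}
        = {p. prime p \<and> p \<le> m + 1} \<union> {p. prime p \<and> m + 1 < p \<and> p \<le> 2 * m + 1}"
      using 3 by auto
    then have "primorial n = primorial (m + 1) * \<Prod>{p. prime p \<and> m + 1 < p \<and> p \<le> 2 * m + 1}"
      unfolding primorial_def by (subst prod.union_disjoint[symmetric]) auto
    also have "\<dots> \<le> 4 ^ (m + 1) * 4 ^ m"
    proof (intro mult_le_mono)
      show "primorial (m + 1) \<le> 4 ^ (m + 1)" using less[of "m + 1"] 3 by simp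
      show "\<Prod>{p. prime p \<and> m + 1 < p \<and> p \<le> 2 * m + 1} \<le> 4 ^ m"
        by (rule order.trans[OF dvd_imp_le[OF prod_primes_between_dvd_binomial] binomial_odd_middle_le])
          simp
    qed
    also have "\<dots> = 4 ^ n" using 3 by (simp add: power_add[symmetric])
    finally show ?thesis .
  qed
qed

lemma Fk_dvd_fact_power_le:
  assumes y: "y \<in> Fk k" and dvd: "y dvd fact n ^ r"
  shows "y \<le> 4 ^ (n * (k - 1))"
proof -
  have "y > 0" and "Kexp y < k" using y unfolding Fk_def by auto
  have exponent_le: "multiplicity p y \<le> k - 1" if "p \<in> prime_factors y" for p
  proof -
    have "multiplicity p y \<le> Kexp y" unfolding Kexp_def using that by (intro Max_ge) auto
    then show ?thesis using \<open>Kexp y < k\<close> by simp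
  qed
  have small_primes: "prime_factors y \<subseteq> {p. prime p \<and> p \<le> n}"
  proof
    fix p assume p: "p \<in> prime_factors y"
    then have "prime p" and "p dvd fact n ^ r"
      using dvd dvd_trans by (auto simp: in_prime_factors_iff)
    then have "p dvd fact n" by (rule prime_dvd_power)
    then show "p \<in> {p. prime p \<and> p \<le> n}"
      using \<open>prime p\<close> by (simp add: prime_dvd_fact_iff)
  qed
  have "y = (\<Prod>p\<in>prime_factors y. p ^ multiplicity p y)"
    using prime_factorization_nat \<open>y > 0\<close> by blast
  also have "\<dots> \<le> (\<Prod>p\<in>prime_factors y. p ^ (k - 1))"
    using exponent_le
    by (intro prod_mono conjI power_increasing) (auto simp: in_prime_factors_iff prime_gt_0_nat Suc_leI)
  also have "\<dots> = (\<Prod>(prime_factors y)) ^ (k - 1)" by (simp add: prod_power_distrib)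
  also have "\<dots> \<le> primorial n ^ (k - 1)"
  proof (intro power_mono)
    have "primorial n > 0" unfolding primorial_def by (intro prod_pos) (auto simp: prime_gt_0_nat)
    moreover have "\<Prod>(prime_factors y) dvd primorial n"
      unfolding primorial_def using small_primes by (intro prod_dvd_prod_subset) auto
    ultimately show "\<Prod>(prime_factors y) \<le> primorial n" by (rule dvd_imp_le[rotated])
  qed simp
  also have "\<dots> \<le> (4 ^ n) ^ (k - 1)" using primorial_le_four_power by (intro power_mono) auto
  finally show ?thesis by (simp add: power_mult)
qed

lemma Pl_dvd_fact_power_le:
  assumes z: "z \<in> Pl l" and dvd: "z dvd fact n ^ r"
  shows "z \<le> 4 ^ (n * r * (l - 1))"
proof -
  have "z > 0" and few_primes: "card (prime_factors z) < l"
    using z unfolding Pl_def omega_def by auto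
  have "z = (\<Prod>p\<in>prime_factors z. p ^ multiplicity p z)"
    using prime_factorization_nat \<open>z > 0\<close> by blast
  also have "\<dots> \<le> (\<Prod>p\<in>prime_factors z. 4 ^ (n * r))"
  proof (intro prod_mono conjI)
    fix p assume "p \<in> prime_factors z"
    then have p: "prime p" by (simp add: in_prime_factors_iff)
    have "p ^ multiplicity p z \<le> p ^ multiplicity p (fact n ^ r)"
      using dvd_imp_multiplicity_le[OF dvd] p
      by (intro power_increasing) (auto simp: prime_gt_0_nat Suc_leI)
    also have "\<dots> = (p ^ multiplicity p (fact n)) ^ r"
      using p by (simp add: prime_elem_multiplicity_power_distrib power_mult[symmetric] mult.commute)
    also have "\<dots> \<le> (4 ^ n) ^ r"
      using prime_power_multiplicity_fact_le[OF p] by (intro power_mono) auto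
    finally show "p ^ multiplicity p z \<le> 4 ^ (n * r)" by (simp add: power_mult)
  qed simp
  also have "\<dots> = (4 ^ (n * r)) ^ card (prime_factors z)" by simp
  also have "\<dots> \<le> (4 ^ (n * r)) ^ (l - 1)" using few_primes by (intro power_increasing) auto
  finally show ?thesis by (simp add: power_mult)
qed

lemma FkPl_dvd_fact_power_le:
  assumes "d \<in> FkPl k l" and dvd: "d dvd fact n ^ r"
  shows "d \<le> (4 ^ (k - 1 + r * (l - 1))) ^ n"
proof -
  obtain y z where d: "d = y * z" and "y \<in> Fk k" and "z \<in> Pl l"
    using assms(1) unfolding FkPl_def by auto
  have "y \<le> 4 ^ (n * (k - 1))"
    using Fk_dvd_fact_power_le[OF \<open>y \<in> Fk k\<close>] dvd d dvd_mult_left by blast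
  moreover have "z \<le> 4 ^ (n * r * (l - 1))"
    using Pl_dvd_fact_power_le[OF \<open>z \<in> Pl l\<close>] dvd d dvd_mult_right by blast
  ultimately have "d \<le> 4 ^ (n * (k - 1)) * 4 ^ (n * r * (l - 1))"
    using d by (simp add: mult_le_mono)
  also have "\<dots> = (4 ^ (k - 1 + r * (l - 1))) ^ n"
    by (simp add: power_add[symmetric] power_mult[symmetric] algebra_simps)
  finally show ?thesis .
qed

lemma abs_poly_le:
  fixes p :: "'a::linordered_idom poly"
  shows "\<bar>poly p x\<bar> \<le> (\<Sum>i\<le>degree p. \<bar>coeff p i\<bar>) * max 1 \<bar>x\<bar> ^ degree p"
proof -
  have "\<bar>poly p x\<bar> \<le> (\<Sum>i\<le>degree p. \<bar>coeff p i * x ^ i\<bar>)"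
    unfolding poly_altdef by (rule sum_abs)
  also have "\<dots> \<le> (\<Sum>i\<le>degree p. \<bar>coeff p i\<bar> * max 1 \<bar>x\<bar> ^ degree p)"
  proof (intro sum_mono)
    fix i assume "i \<in> {..degree p}"
    have "\<bar>x\<bar> ^ i \<le> max 1 \<bar>x\<bar> ^ i" by (intro power_mono) auto
    also have "\<dots> \<le> max 1 \<bar>x\<bar> ^ degree p" using \<open>i \<in> {..degree p}\<close> by (intro power_increasing) auto
    finally have "\<bar>x\<bar> ^ i \<le> max 1 \<bar>x\<bar> ^ degree p" .
    then show "\<bar>coeff p i * x ^ i\<bar> \<le> \<bar>coeff p i\<bar> * max 1 \<bar>x\<bar> ^ degree p"
      by (simp add: abs_mult power_abs mult_left_mono)
  qed
  finally show ?thesis by (simp add: sum_distrib_right)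
qed

lemma abs_mpoly_eval_le:
  fixes T :: int
  assumes "T \<ge> 1" and "\<And>i. i < m \<Longrightarrow> \<bar>ys ! i\<bar> \<le> T"
  shows "\<bar>mpoly_eval m R ys\<bar> \<le> (\<Sum>(c, e) \<leftarrow> R. \<bar>c\<bar>) * T ^ (\<Sum>(c, e) \<leftarrow> R. \<Sum>i<m. e i)"
proof (induction R)
  case (Cons ce R)
  obtain c e where ce: "ce = (c, e)" by fastforce
  define C where "C = (\<Sum>(c, e) \<leftarrow> R. \<bar>c\<bar>)"
  define D where "D = (\<Sum>(c, e) \<leftarrow> R. \<Sum>i<m. e i)"
  have "C \<ge> 0" unfolding C_def by (induction R) auto
  have monomial_le: "\<bar>\<Prod>i<m. ys ! i ^ e i\<bar> \<le> T ^ (\<Sum>i<m. e i)"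
  proof -
    have "\<bar>\<Prod>i<m. ys ! i ^ e i\<bar> = (\<Prod>i<m. \<bar>ys ! i\<bar> ^ e i)" by (simp add: abs_prod power_abs)
    also have "\<dots> \<le> (\<Prod>i<m. T ^ e i)" using assms(2) by (intro prod_mono conjI power_mono) auto
    finally show ?thesis by (simp add: power_sum)
  qed
  have "mpoly_eval m (ce # R) ys = c * (\<Prod>i<m. ys ! i ^ e i) + mpoly_eval m R ys"
    by (simp add: mpoly_eval_def ce)
  moreover have "\<bar>c * (\<Prod>i<m. ys ! i ^ e i)\<bar> \<le> \<bar>c\<bar> * T ^ (\<Sum>i<m. e i)"
    using monomial_le by (simp add: abs_mult mult_left_mono)
  ultimately have "\<bar>mpoly_eval m (ce # R) ys\<bar> \<le> \<bar>c\<bar> * T ^ (\<Sum>i<m. e i) + C * T ^ D"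
    using Cons.IH unfolding C_def D_def by linarith
  also have "\<dots> \<le> \<bar>c\<bar> * T ^ ((\<Sum>i<m. e i) + D) + C * T ^ ((\<Sum>i<m. e i) + D)"
    using \<open>T \<ge> 1\<close> \<open>C \<ge> 0\<close> by (intro add_mono mult_left_mono power_increasing) auto
  finally show ?case unfolding C_def D_def ce by (simp add: algebra_simps)
qed (simp add: mpoly_eval_def)

lemma prod_list_le_power:
  fixes T :: nat
  shows "(\<And>y. y \<in> set ys \<Longrightarrow> y \<le> T) \<Longrightarrow> prod_list ys \<le> T ^ length ys"
  by (induction ys) (auto intro: mult_le_mono)

lemma S_set_abs_le_exponential:
  obtains A C :: int where "A \<ge> 1" and "C \<ge> 1"
    and "\<And>n x. x \<in> S_set k l m a R \<Longrightarrow> (x - a) dvd int (fact n ^ r) \<Longrightarrow> \<bar>x\<bar> \<le> A * C ^ n"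
proof -
  define CR where "CR = (\<Sum>(c, e) \<leftarrow> R. \<bar>c\<bar>)"
  define ER where "ER = (\<Sum>(c, e) \<leftarrow> R. \<Sum>i<m. e i)"
  define B :: nat where "B = 4 ^ (k - 1 + r * (l - 1))"
  have "CR \<ge> 0" unfolding CR_def by (induction R) auto
  have "B \<ge> 1" unfolding B_def by simp
  have "\<bar>x\<bar> \<le> (\<bar>a\<bar> + CR + 1) * (int B ^ (m + ER)) ^ n"
    if "x \<in> S_set k l m a R" and x_dvd: "(x - a) dvd int (fact n ^ r)" for n x
  proof -
    obtain xs where xs: "length xs = m" "set xs \<subseteq> FkPl k l"
      and x: "x = int (prod_list xs) * mpoly_eval m R (map int xs) + a"
      using \<open>x \<in> S_set k l m a R\<close> unfolding S_set_def by blast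
    define T where "T = B ^ n"
    have "T \<ge> 1" unfolding T_def using \<open>B \<ge> 1\<close> by simp
    have "int (prod_list xs) dvd int (fact n ^ r)"
      using x_dvd x by (metis add_diff_cancel_right' dvd_mult_left)
    then have entry_le: "y \<le> T" if "y \<in> set xs" for y
      using FkPl_dvd_fact_power_le that xs(2) prod_list_dvd[OF that] unfolding T_def B_def
      by (metis dvd_trans of_nat_dvd_iff subsetD)
    have prod_le: "int (prod_list xs) \<le> int T ^ m"
      using prod_list_le_power[of xs T] entry_le xs(1) by (metis of_nat_le_iff of_nat_power)
    have mpoly_le: "\<bar>mpoly_eval m R (map int xs)\<bar> \<le> CR * int T ^ ER"
      unfolding CR_def ER_def using \<open>T \<ge> 1\<close> entry_le xs(1)
      by (intro abs_mpoly_eval_le) auto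
    have "\<bar>x\<bar> \<le> int (prod_list xs) * \<bar>mpoly_eval m R (map int xs)\<bar> + \<bar>a\<bar>"
      unfolding x using abs_triangle_ineq by (metis abs_mult abs_of_nat)
    also have "\<dots> \<le> int T ^ m * (CR * int T ^ ER) + \<bar>a\<bar>"
      using prod_le mpoly_le by (intro add_mono mult_mono) auto
    also have "\<dots> \<le> (\<bar>a\<bar> + CR + 1) * int T ^ (m + ER)"
    proof -
      have "1 \<le> int T ^ (m + ER)" using \<open>T \<ge> 1\<close> by simp
      moreover from this have "\<bar>a\<bar> \<le> \<bar>a\<bar> * int T ^ (m + ER)"
        using mult_left_mono[of 1 _ "\<bar>a\<bar>"] by simp
      ultimately show ?thesis by (simp add: power_add algebra_simps)
    qed
    finally show ?thesis unfolding T_def by (simp add: power_mult[symmetric] mult.commute)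
  qed
  moreover have "\<bar>a\<bar> + CR + 1 \<ge> 1" and "int B ^ (m + ER) \<ge> 1"
    using \<open>CR \<ge> 0\<close> \<open>B \<ge> 1\<close> by simp_all
  ultimately show thesis by (rule that[rotated 2])
qed

lemma finite_fact_le_exponential:
  fixes K L :: int
  shows "finite {n. int (fact n) \<le> K * L ^ n}"
proof -
  define c where "c = real_of_int \<bar>L\<bar>"
  have "(\<lambda>n. c ^ n /\<^sub>R fact n) \<longlonglongrightarrow> 0"
    using exp_converges sums_summable summable_LIMSEQ_zero by blast
  then have "(\<lambda>n. (\<bar>K\<bar> + 1) * (c ^ n /\<^sub>R fact n)) \<longlonglongrightarrow> 0"
    by (rule tendsto_mult_right_zero)
  then have "eventually (\<lambda>n. (\<bar>K\<bar> + 1) * (c ^ n /\<^sub>R fact n) < 1) sequentially"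
    by (rule order_tendstoD) simp
  then have "eventually (\<lambda>n. K * L ^ n < int (fact n)) sequentially"
  proof (rule eventually_mono)
    fix n assume "(\<bar>K\<bar> + 1) * (c ^ n /\<^sub>R fact n) < 1"
    then have "real_of_int ((\<bar>K\<bar> + 1) * \<bar>L\<bar> ^ n) < real_of_int (int (fact n))"
      unfolding c_def by (simp add: field_simps)
    moreover have "K * L ^ n \<le> (\<bar>K\<bar> + 1) * \<bar>L\<bar> ^ n"
    proof -
      have "K * L ^ n \<le> \<bar>K\<bar> * \<bar>L\<bar> ^ n" by (metis abs_ge_self abs_mult power_abs)
      also have "\<dots> \<le> (\<bar>K\<bar> + 1) * \<bar>L\<bar> ^ n" by (intro mult_right_mono) auto
      finally show ?thesis .
    qed
    ultimately show "K * L ^ n < int (fact n)" by linarith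
  qed
  then show ?thesis
    by (simp add: cofinite_eq_sequentially[symmetric] eventually_cofinite not_less)
qed

definition fact_dfact_prod :: "nat \<Rightarrow> nat \<Rightarrow> nat list \<Rightarrow> nat" where
  "fact_dfact_prod s r ns = (\<Prod>i<s. fact (ns ! i)) * (\<Prod>i\<in>{s..<r}. dfact (ns ! i))"

lemma fact_dfact_prod_pos: "fact_dfact_prod s r ns > 0"
  unfolding fact_dfact_prod_def using dfact_pos by (simp add: prod_pos)

lemma fact_dfact_prod_dvd_fact_power:
  assumes "s \<le> r" and "\<And>i. i < r \<Longrightarrow> ns ! i \<le> n"
  shows "fact_dfact_prod s r ns dvd fact n ^ r"
proof -
  have "(\<Prod>i<s. fact (ns ! i)) dvd (\<Prod>i<s. fact n :: nat)"
    using assms by (intro prod_dvd_prod fact_dvd) simp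
  moreover have "(\<Prod>i\<in>{s..<r}. dfact (ns ! i)) dvd (\<Prod>i\<in>{s..<r}. fact n)"
    using assms(2) by (intro prod_dvd_prod) (meson atLeastLessThan_iff dfact_dvd_fact dvd_trans fact_dvd)
  ultimately have "fact_dfact_prod s r ns dvd fact n ^ s * fact n ^ (r - s)"
    unfolding fact_dfact_prod_def by (simp add: mult_dvd_mono)
  then show ?thesis using \<open>s \<le> r\<close> by (simp add: power_add[symmetric])
qed

lemma fact_le_fact_dfact_prod_square:
  assumes "i < r"
  shows "fact (ns ! i) \<le> fact_dfact_prod s r ns ^ 2"
proof (cases "i < s")
  case True
  then have "fact (ns ! i) dvd fact_dfact_prod s r ns"
    unfolding fact_dfact_prod_def by (intro dvd_mult2 dvd_prodI) auto
  then have "fact (ns ! i) \<le> fact_dfact_prod s r ns"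
    using fact_dfact_prod_pos by (rule dvd_imp_le)
  also have "\<dots> \<le> fact_dfact_prod s r ns ^ 2"
    using fact_dfact_prod_pos[of s r ns] by (simp add: power2_eq_square)
  finally show ?thesis .
next
  case False
  then have "dfact (ns ! i) dvd fact_dfact_prod s r ns"
    unfolding fact_dfact_prod_def using assms by (intro dvd_mult dvd_prodI) auto
  then have "dfact (ns ! i) ^ 2 \<le> fact_dfact_prod s r ns ^ 2"
    using fact_dfact_prod_pos by (intro power_mono dvd_imp_le) auto
  then show ?thesis using fact_le_dfact_square[of "ns ! i"] by linarith
qed

lemma fact_dfact_prod_Max:
  assumes "length ns = r" and "s \<le> r"
  defines "n \<equiv> Max (insert 0 (set ns))"
  shows "fact n \<le> fact_dfact_prod s r ns ^ 2" and "fact_dfact_prod s r ns dvd fact n ^ r"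
proof -
  have "n \<in> insert 0 (set ns)" unfolding n_def by (intro Max_in) auto
  then show "fact n \<le> fact_dfact_prod s r ns ^ 2"
  proof
    assume "n = 0"
    then show ?thesis using fact_dfact_prod_pos[of s r ns] by (simp add: Suc_le_eq)
  next
    assume "n \<in> set ns"
    then obtain i where "i < r" "ns ! i = n" using \<open>length ns = r\<close> by (auto simp: in_set_conv_nth)
    then show ?thesis using fact_le_fact_dfact_prod_square[of i r ns s] by simp
  qed
  show "fact_dfact_prod s r ns dvd fact n ^ r"
    unfolding n_def using assms(1,2) by (intro fact_dfact_prod_dvd_fact_power) auto
qed

lemma fact_dfact_solutions_bounded:
  fixes P :: "int poly"
  assumes "[:-a, 1:] dvd P" and "s \<le> r"
  obtains n0 M where "\<And>ns x. length ns = r \<Longrightarrow> x \<in> S_set k l m a R \<Longrightarrow>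
    poly P x = int (fact_dfact_prod s r ns) \<Longrightarrow> set ns \<subseteq> {..n0} \<and> \<bar>x\<bar> \<le> M"
proof -
  obtain A C :: int where "A \<ge> 1" "C \<ge> 1" and x_le:
    "\<And>n x. x \<in> S_set k l m a R \<Longrightarrow> (x - a) dvd int (fact n ^ r) \<Longrightarrow> \<bar>x\<bar> \<le> A * C ^ n"
    using S_set_abs_le_exponential[where k = k and l = l and m = m and a = a and R = R and r = r] by blast
  define d where "d = degree P"
  define Cp where "Cp = (\<Sum>i\<le>d. \<bar>coeff P i\<bar>)"
  obtain n0 where n0: "\<And>n. int (fact n) \<le> (Cp * A ^ d) ^ 2 * ((C ^ d) ^ 2) ^ n \<Longrightarrow> n \<le> n0"
    using finite_fact_le_exponential[of "(Cp * A ^ d) ^ 2" "(C ^ d) ^ 2"]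
    by (auto simp: finite_nat_set_iff_bounded_le)
  have "set ns \<subseteq> {..n0} \<and> \<bar>x\<bar> \<le> A * C ^ n0"
    if "length ns = r" "x \<in> S_set k l m a R" and PN: "poly P x = int (fact_dfact_prod s r ns)" for ns x
  proof -
    define N where "N = fact_dfact_prod s r ns"
    define n where "n = Max (insert 0 (set ns))"
    have "fact n \<le> N ^ 2" and "N dvd fact n ^ r"
      unfolding N_def n_def using fact_dfact_prod_Max \<open>length ns = r\<close> \<open>s \<le> r\<close> by blast+
    moreover obtain Q where P_eq: "P = [:-a, 1:] * Q" using assms(1) by (rule dvdE)
    have "poly P x = (x - a) * poly Q x" unfolding P_eq by (simp add: algebra_simps)
    then have "(x - a) dvd int N" using PN unfolding N_def by (metis dvd_triv_left)
    ultimately have "(x - a) dvd int (fact n ^ r)" by (meson dvd_trans int_dvd_int_iff)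
    then have x_le: "\<bar>x\<bar> \<le> A * C ^ n" using x_le \<open>x \<in> S_set k l m a R\<close> by blast
    have "A * C ^ n \<ge> 1" using \<open>A \<ge> 1\<close> \<open>C \<ge> 1\<close> by (metis mult_mono' mult_1 one_le_power zero_le_one)
    then have "max 1 \<bar>x\<bar> ^ d \<le> (A * C ^ n) ^ d" using x_le by (intro power_mono) auto
    have "int N \<le> \<bar>poly P x\<bar>" using PN unfolding N_def by simp
    also have "\<dots> \<le> Cp * max 1 \<bar>x\<bar> ^ d" unfolding Cp_def d_def by (rule abs_poly_le)
    also have "\<dots> \<le> Cp * (A * C ^ n) ^ d"
      using \<open>max 1 \<bar>x\<bar> ^ d \<le> (A * C ^ n) ^ d\<close> by (intro mult_left_mono) (auto simp: Cp_def sum_nonneg)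
    finally have "int N \<le> Cp * (A * C ^ n) ^ d" .
    have "int (fact n) \<le> int N ^ 2" using \<open>fact n \<le> N ^ 2\<close> by (metis of_nat_le_iff of_nat_power)
    also have "\<dots> \<le> (Cp * (A * C ^ n) ^ d) ^ 2"
      using \<open>int N \<le> Cp * (A * C ^ n) ^ d\<close> by (intro power_mono) auto
    also have "\<dots> = (Cp * A ^ d) ^ 2 * ((C ^ d) ^ 2) ^ n"
      by (simp add: power_mult_distrib power_mult[symmetric] ac_simps)
    finally have "n \<le> n0" by (rule n0)
    then have "A * C ^ n \<le> A * C ^ n0"
      using \<open>A \<ge> 1\<close> \<open>C \<ge> 1\<close> by (intro mult_left_mono power_increasing) auto
    moreover have "set ns \<subseteq> {..n}" unfolding n_def by auto
    ultimately show ?thesis using x_le \<open>n \<le> n0\<close> by fastforce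
  qed
  then show thesis by (rule that)
qed

theorem theorem5:
  fixes k l m s r e :: nat and a :: int
    and R :: "(int \<times> (nat \<Rightarrow> nat)) list"
    and Ps :: "int poly list" and es :: "nat list" and P :: "int poly"
  assumes "k \<ge> 2" and "l \<ge> 2" and "m \<ge> 1"
    and "s \<le> r" and "r \<ge> 1"
    and "e \<ge> 1"
    and "length es = length Ps" and "\<forall>j\<in>set es. j \<ge> 1"
    and "distinct Ps" and "\<forall>Q\<in>set Ps. irreducible Q"
    and "P = [:-a, 1:] ^ e * (\<Prod>j<length Ps. (Ps ! j) ^ (es ! j))"
  shows "finite {(ns, x). length ns = r \<and> (\<forall>n\<in>set ns. n > 0) \<and> x \<in> S_set k l m a R \<and>
            poly P x = int ((\<Prod>i<s. fact (ns ! i)) * (\<Prod>i\<in>{s..<r}. dfact (ns ! i)))}"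
proof -
  have "[:-a, 1:] dvd P"
    using assms(6) unfolding assms(11) by (intro dvd_mult2 dvd_power) auto
  then obtain n0 M where bounded: "\<And>ns x. length ns = r \<Longrightarrow> x \<in> S_set k l m a R \<Longrightarrow>
      poly P x = int (fact_dfact_prod s r ns) \<Longrightarrow> set ns \<subseteq> {..n0} \<and> \<bar>x\<bar> \<le> M"
    using fact_dfact_solutions_bounded[where k = k and l = l and m = m and R = R] assms(4) by blast
  have "{(ns, x). length ns = r \<and> (\<forall>n\<in>set ns. n > 0) \<and> x \<in> S_set k l m a R \<and>
            poly P x = int ((\<Prod>i<s. fact (ns ! i)) * (\<Prod>i\<in>{s..<r}. dfact (ns ! i)))}
        \<subseteq> {ns. set ns \<subseteq> {..n0} \<and> length ns = r} \<times> {-M..M}"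
    using bounded unfolding fact_dfact_prod_def by fastforce
  moreover have "finite ({ns. set ns \<subseteq> {..n0} \<and> length ns = r} \<times> {-M..M})"
    by (intro finite_cartesian_product finite_lists_length_eq) auto
  ultimately show ?thesis by (rule finite_subset)
qed

end
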